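(* Let $(G,L,v)$ be a reachable triple and $D$ a nonnegative integer. Then for every color $i\in[4]$ such that $i\in L(u)$ for some neighbor $u$ of $v$ in $G$: (1) if $\deg_G(v)=2$, then $P(G,L,v,i,D)\le\frac{12}{25}$; (2) if $\deg_G(v)=1$, then $P(G,L,v,i,D)\le\frac{6}{13}$.
   Context: Colors are $[4]=\{1,2,3,4\}$. A list-coloring instance $(G,L)$ is a finite simple graph $G=(V,E)$ with $L:V\to 2^{[4]}$. For a vertex $v$, $G_v$ is $G$ with $v$ and its incident edges removed, and $G_{v,w}=(G_v)_w$. If $v$ has neighbors $v_1,\dots,v_d$ (in a fixed order), then for $k\in[d]$ and a color $j$, $L_{k,j}$ is the list assignment on $G_v$ with $L_{k,j}(v_\ell)=L(v_\ell)\setminus\{j\}$ for $\ell<k$ and $L_{k,j}(u)=L(u)$ for all other vertices $u$ (so $L_{1,j}=L$). A triple $(G,L,v)$ with $v\in V$ is reachable if $\deg_G(u)\le3$ and $|L(u)|\ge\deg_G(u)+1$ for every $u\in V$, and moreover $\deg_G(v)\le2$ and $|L(v)|\ge\deg_G(v)+2$. The procedure $P(G,L,v,i,D)$ ($i\in[4]$, $D$ an integer) is defined recursively (empty products equal $1$): (a) If $i\notin L(v)$, return $0$. Otherwise, if $D\le 0$ or $\deg_G(v)=0$, return $1/|L(v)|$. (b) If $\deg_G(v)=1$ with neighbor $v_1$: let $x=P(G_v,L,v_1,i,D-1)$. If $|L(v)|=2$, say $L(v)=\{i,j\}$, let $y=P(G_v,L,v_1,j,D-1)$ and return $\frac{1-x}{2-x-y}$.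 If $|L(v)|=4$, return $\frac{1-x}{3}$. If $|L(v)|=3$, let $j$ be the unique color in $[4]\setminus L(v)$, $y=P(G_v,L,v_1,j,D-1)$, and return $\frac{1-x}{2+y}$. (c) If $\deg_G(v)=2$: order its neighbors $v_1,v_2$ so that $\deg_G(v_1)\ge\deg_G(v_2)$ and, if $\deg_G(v_1)=\deg_G(v_2)=1$, so that $i\notin L(v_1)$ implies $i\notin L(v_2)$. Let $u_1,\dots,u_{d_1}$ be the neighbors of $v_1$ in $G_v$ (fixed order) and for $k\in[d_1]$, $w\in[4]$ let $L'_{k,w}$ be the list assignment on $G_{v,v_1}$ with $L'_{k,w}(u_\ell)=L(u_\ell)\setminus\{w\}$ for $\ell<k$ and $L'_{k,w}(u)=L(u)$ otherwise. Set $x_{k,w}=P(G_{v,v_1},L'_{k,w},u_k,w,D-1)$ for $k\in[d_1]$, $w\in L(v_1)$. For $j\in L(v)$ set $f_j=0$ if $j\notin L(v_1)$ and otherwise $f_j=\frac{\prod_{k=1}^{d_1}(1-x_{k,j})}{\sum_{w\in L(v_1)}\prod_{k=1}^{d_1}(1-x_{k,w})}$, and set $y_j=P(G_v,L_{2,j},v_2,j,D-1)$. Return $\frac{(1-f_i)(1-y_i)}{\sum_{j\in L(v)}(1-f_j)(1-y_j)}$. (d) If $\deg_G(v)=3$ with neighbors $v_1,v_2,v_3$: for $j\in L(v)$ let $x_j=P(G_v,L_{1,j},v_1,j,D-1)$, $y_j=P(G_v,L_{2,j},v_2,j,D-1)$, $z_j=P(G_v,L_{3,j},v_3,j,D-1)$,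 and return $\frac{(1-x_i)(1-y_i)(1-z_i)}{\sum_{j\in L(v)}(1-x_j)(1-y_j)(1-z_j)}$. For reachable triples, all recursive calls are again on reachable triples and case (d) never occurs. *)

theory Defs
  imports Complex_Main
begin

text \<open>A graph is a pair (V, E) with E a set of two-element subsets of V.
  Colours are natural numbers; the colour set [4] is {1..4}.\<close>

type_synonym 'a graph = "'a set \<times> 'a set set"

definition simple_graph :: "'a graph \<Rightarrow> bool" where
  "simple_graph G \<longleftrightarrow> finite (fst G) \<and>
     (\<forall>e\<in>snd G. \<exists>u w. u \<noteq> w \<and> e = {u, w} \<and> u \<in> fst G \<and> w \<in> fst G)"

definition nbrs :: "'a graph \<Rightarrow> 'a \<Rightarrow> 'a set" where
  "nbrs G v = {u. {u, v} \<in> snd G}"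

definition deg :: "'a graph \<Rightarrow> 'a \<Rightarrow> nat" where
  "deg G v = card (nbrs G v)"

definition del :: "'a graph \<Rightarrow> 'a \<Rightarrow> 'a graph" where
  "del G v = (fst G - {v}, {e \<in> snd G. v \<notin> e})"

text \<open>A neighbour ordering: for every graph and vertex, a fixed (arbitrary) list
  enumerating the neighbours without repetition.\<close>
definition valid_nbo :: "('a graph \<Rightarrow> 'a \<Rightarrow> 'a list) \<Rightarrow> bool" where
  "valid_nbo nbo \<longleftrightarrow> (\<forall>G v. finite (nbrs G v) \<longrightarrow>
      distinct (nbo G v) \<and> set (nbo G v) = nbrs G v)"

definition list_instance :: "'a graph \<Rightarrow> ('a \<Rightarrow> nat set) \<Rightarrow> bool" where
  "list_instance G L \<longleftrightarrow> simple_graph G \<and> (\<forall>u\<in>fst G. L u \<subseteq> {1..4})"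

definition reachable :: "'a graph \<Rightarrow> ('a \<Rightarrow> nat set) \<Rightarrow> 'a \<Rightarrow> bool" where
  "reachable G L v \<longleftrightarrow> list_instance G L \<and> v \<in> fst G \<and>
     (\<forall>u\<in>fst G. deg G u \<le> 3 \<and> card (L u) \<ge> deg G u + 1) \<and>
     deg G v \<le> 2 \<and> card (L v) \<ge> deg G v + 2"

text \<open>L_{k,j} w.r.t. a neighbour list vs (0-indexed k): remove j from the lists of
  the first k vertices of vs.\<close>
definition Lmod :: "('a \<Rightarrow> nat set) \<Rightarrow> 'a list \<Rightarrow> nat \<Rightarrow> nat \<Rightarrow> 'a \<Rightarrow> nat set" where
  "Lmod L vs k j = (\<lambda>u. if u \<in> set (take k vs) then L u - {j} else L u)"

text \<open>Ordering of the two neighbours in case (c): (a,b) is admissible as (v1,v2).\<close>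
definition good_pair :: "'a graph \<Rightarrow> ('a \<Rightarrow> nat set) \<Rightarrow> nat \<Rightarrow> 'a \<Rightarrow> 'a \<Rightarrow> bool" where
  "good_pair G L i a b \<longleftrightarrow> deg G a \<ge> deg G b \<and>
     (deg G a = 1 \<and> deg G b = 1 \<longrightarrow> (i \<notin> L a \<longrightarrow> i \<notin> L b))"

definition Pstep ::
  "('a graph \<Rightarrow> 'a \<Rightarrow> 'a list) \<Rightarrow>
   ('a graph \<Rightarrow> ('a \<Rightarrow> nat set) \<Rightarrow> 'a \<Rightarrow> nat \<Rightarrow> real) \<Rightarrow>
   'a graph \<Rightarrow> ('a \<Rightarrow> nat set) \<Rightarrow> 'a \<Rightarrow> nat \<Rightarrow> real" where
  "Pstep nbo R G L v i =
    (if i \<notin> L v then 0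
     else if deg G v = 0 then 1 / real (card (L v))
     else if deg G v = 1 then
       (let v1 = hd (nbo G v); Gv = del G v; x = R Gv L v1 i in
        if card (L v) = 2 then
          (let j = the_elem (L v - {i}); y = R Gv L v1 j in (1 - x) / (2 - x - y))
        else if card (L v) = 4 then (1 - x) / 3
        else if card (L v) = 3 then
          (let j = the_elem ({1..4} - L v); y = R Gv L v1 j in (1 - x) / (2 + y))
        else undefined)
     else if deg G v = 2 then
       (let a = nbo G v ! 0; b = nbo G v ! 1;
            v1 = (if good_pair G L i a b then a else b);
            v2 = (if good_pair G L i a b then b else a);
            Gv = del G v; Gvv = del Gv v1;
            us = nbo Gv v1; d1 = length us;
            x = (\<lambda>k w. R Gvv (Lmod L us k w) (us ! k) w);
            Q = (\<lambda>w. \<Prod>k<d1. (1 - x k w));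
            f = (\<lambda>j. if j \<notin> L v1 then 0 else Q j / (\<Sum>w\<in>L v1. Q w));
            y = (\<lambda>j. R Gv (Lmod L [v1, v2] 1 j) v2 j)
        in (1 - f i) * (1 - y i) / (\<Sum>j\<in>L v. (1 - f j) * (1 - y j)))
     else if deg G v = 3 then
       (let vs = nbo G v; Gv = del G v;
            x = (\<lambda>j. R Gv (Lmod L vs 0 j) (vs ! 0) j);
            y = (\<lambda>j. R Gv (Lmod L vs 1 j) (vs ! 1) j);
            z = (\<lambda>j. R Gv (Lmod L vs 2 j) (vs ! 2) j)
        in (1 - x i) * (1 - y i) * (1 - z i) /
           (\<Sum>j\<in>L v. (1 - x j) * (1 - y j) * (1 - z j)))
     else undefined)"

primrec Pproc ::
  "('a graph \<Rightarrow> 'a \<Rightarrow> 'a list) \<Rightarrow> 'a graph \<Rightarrow> ('a \<Rightarrow> nat set) \<Rightarrow> 'a \<Rightarrow> nat \<Rightarrow> nat \<Rightarrow> real" where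
  "Pproc nbo G L v i 0 = (if i \<notin> L v then 0 else 1 / real (card (L v)))"
| "Pproc nbo G L v i (Suc D) = Pstep nbo (\<lambda>G' L' v' i'. Pproc nbo G' L' v' i' D) G L v i"

end

theory Submission
  imports Defs
begin

text \<open>By induction on the depth, every value returned on a reachable triple lies in [0, 1/2] and,
  when the colour is in the list of the vertex, is at least 1/13. With these a priori bounds on
  the recursive values, the two estimates follow from the explicit formulas of cases (b) and (c):
  in case (b) the neighbour carries colour i, so x \<ge> 1/13; in case (c) either v1 carries i, and
  then the normalised product f_i is at least 1/16 because every factor 1 - x is at least 1/2,
  or v2 carries i and then y_i \<ge> 1/13.\<close>

subsection \<open>Real inequalities\<close>

lemma prod_one_minus_bounds:
  fixes x :: "nat \<Rightarrow> real"
  assumes "\<And>k. k < d \<Longrightarrow> 0 \<le> x k \<and> x k \<le> 1/2"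
  shows "(1/2)^d \<le> (\<Prod>k<d. 1 - x k)" "(\<Prod>k<d. 1 - x k) \<le> 1"
proof -
  have "(\<Prod>k<d. 1/2::real) \<le> (\<Prod>k<d. 1 - x k)"
    by (rule prod_mono) (use assms in auto)
  then show "(1/2)^d \<le> (\<Prod>k<d. 1 - x k)" by simp
  show "(\<Prod>k<d. 1 - x k) \<le> 1"
    by (rule prod_le_1) (use assms in force)
qed

lemma normalized_weights_distribution:
  fixes Q :: "nat \<Rightarrow> real" and A :: "nat set"
  assumes A: "A \<subseteq> {1..4}" "A \<noteq> {}"
    and Q_pos: "\<And>w. w \<in> A \<Longrightarrow> 0 < Q w"
  defines "f \<equiv> \<lambda>j. if j \<notin> A then 0 else Q j / sum Q A"
  shows "0 \<le> f j" "f j \<le> 1" "sum f {1..4} = 1"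
proof -
  have fin: "finite A" using A(1) finite_subset by blast
  have sum_pos: "sum Q A > 0" using fin A(2) Q_pos by (simp add: sum_pos)
  show "0 \<le> f j" unfolding f_def using Q_pos sum_pos by (auto intro: divide_nonneg_pos less_imp_le)
  show "f j \<le> 1"
  proof (cases "j \<in> A")
    case True
    have "Q j \<le> sum Q A"
      by (rule member_le_sum[OF True _ fin]) (use Q_pos in \<open>auto intro: less_imp_le\<close>)
    then show ?thesis using True sum_pos by (simp add: f_def)
  qed (simp add: f_def)
  have "sum f {1..4} = sum f A"
    by (rule sum.mono_neutral_right) (use A in \<open>auto simp: f_def\<close>)
  also have "\<dots> = (\<Sum>j\<in>A. Q j / sum Q A)" unfolding f_def by simp
  also have "\<dots> = 1" using sum_pos by (simp add: sum_divide_distrib[symmetric])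
  finally show "sum f {1..4} = 1" .
qed

lemma normalized_weight_bounds:
  fixes Q :: "nat \<Rightarrow> real" and A :: "nat set"
  assumes A: "A \<subseteq> {1..4}" "i \<in> A" "card A \<ge> d + 2" and "d \<le> 2"
    and Q_bounds: "\<And>w. w \<in> A \<Longrightarrow> (1/2)^d \<le> Q w \<and> Q w \<le> 1"
  shows "Q i / sum Q A \<le> 4/7" "1/16 \<le> Q i / sum Q A"
proof -
  have fin: "finite A" using A(1) finite_subset by blast
  define r where "r = sum Q (A - {i})"
  have split: "sum Q A = Q i + r" unfolding r_def using fin A(2) by (simp add: sum.remove)
  have "real (card (A - {i})) * (1/2)^d \<le> r"
    unfolding r_def using sum_mono[of "A - {i}" "\<lambda>_. (1/2::real)^d" Q] Q_bounds by simp
  moreover have "card (A - {i}) \<ge> d + 1" using A fin by simp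
  ultimately have "real (d + 1) * (1/2)^d \<le> r"
    by (smt (verit) of_nat_le_iff mult_right_mono zero_le_power zero_le_divide_1_iff)
  moreover have "real (d + 1) * (1/2)^d \<ge> 3/4" using \<open>d \<le> 2\<close>
    by (cases d; cases "d - 1"; auto)
  ultimately have r: "r \<ge> 3/4" by linarith
  have Qi: "(1/2)^d \<le> Q i" "Q i \<le> 1" using Q_bounds A(2) by auto
  then have "Q i > 0" by (smt (verit) zero_less_power zero_less_divide_1_iff)
  with Qi r show "Q i / sum Q A \<le> 4/7" unfolding split by (simp add: divide_simps)
  have "(1/2::real)^2 \<le> (1/2)^d" using \<open>d \<le> 2\<close> by (simp add: power_decreasing)
  then have "1/4 \<le> Q i" using Qi by (simp add: power2_eq_square)
  moreover have "r \<le> 3"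
  proof -
    have "r \<le> real (card (A - {i}))"
      unfolding r_def using sum_mono[of "A - {i}" Q "\<lambda>_. 1"] Q_bounds by auto
    moreover have "card (A - {i}) \<le> card ({1..4::nat} - {i})"
      using A by (intro card_mono) auto
    moreover have "card ({1..4::nat} - {i}) = 3" using A by auto
    ultimately show ?thesis by linarith
  qed
  ultimately show "1/16 \<le> Q i / sum Q A" unfolding split using r by (simp add: divide_simps)
qed

lemma sum_other_colours_bounds:
  fixes f y :: "nat \<Rightarrow> real"
  assumes f_bounds: "\<And>j. j \<in> {1..4} \<Longrightarrow> 0 \<le> f j \<and> f j \<le> 1"
    and y_bounds: "\<And>j. j \<in> {1..4} \<Longrightarrow> 0 \<le> y j \<and> y j \<le> 1/2"
    and f_sum: "sum f {1..4} = 1" and i: "i \<in> {1..4}"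
  shows "2 + f i \<le> 2 * (\<Sum>j\<in>{1..4} - {i}. (1 - f j) * (1 - y j))"
    "(\<Sum>j\<in>{1..4} - {i}. (1 - f j) * (1 - y j)) \<le> 2 + f i"
proof -
  define S where "S = {1..4::nat} - {i}"
  have "sum f S = 1 - f i" using f_sum i unfolding S_def by (simp add: sum.remove)
  moreover have "card S = 3" unfolding S_def using i by simp
  ultimately have sum_S: "(\<Sum>j\<in>S. 1 - f j) = 2 + f i" by (simp add: sum_subtractf)
  have factor: "0 \<le> 1 - f j" "1/2 \<le> 1 - y j" "1 - y j \<le> 1" if "j \<in> S" for j
    using that f_bounds y_bounds unfolding S_def by auto
  have "(\<Sum>j\<in>S. (1 - f j) / 2) \<le> (\<Sum>j\<in>S. (1 - f j) * (1 - y j))"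
  proof (rule sum_mono)
    fix j assume "j \<in> S"
    from mult_left_mono[OF factor(2,1)[OF this]] show "(1 - f j) / 2 \<le> (1 - f j) * (1 - y j)"
      by simp
  qed
  then show "2 + f i \<le> 2 * (\<Sum>j\<in>{1..4} - {i}. (1 - f j) * (1 - y j))"
    using sum_S unfolding S_def by (simp add: sum_divide_distrib[symmetric])
  have "(\<Sum>j\<in>S. (1 - f j) * (1 - y j)) \<le> (\<Sum>j\<in>S. 1 - f j)"
  proof (rule sum_mono)
    fix j assume "j \<in> S"
    from mult_left_mono[OF factor(3,1)[OF this]] show "(1 - f j) * (1 - y j) \<le> 1 - f j"
      by simp
  qed
  then show "(\<Sum>j\<in>{1..4} - {i}. (1 - f j) * (1 - y j)) \<le> 2 + f i"
    using sum_S unfolding S_def by simp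
qed

lemma deg2_ratio_bounds:
  fixes f y :: "nat \<Rightarrow> real"
  assumes f_bounds: "\<And>j. j \<in> {1..4} \<Longrightarrow> 0 \<le> f j \<and> f j \<le> 1"
    and y_bounds: "\<And>j. j \<in> {1..4} \<Longrightarrow> 0 \<le> y j \<and> y j \<le> 1/2"
    and f_sum: "sum f {1..4} = 1" and i: "i \<in> {1..4}"
  defines "P \<equiv> (1 - f i) * (1 - y i) / (\<Sum>j\<in>{1..4}. (1 - f j) * (1 - y j))"
  shows "0 \<le> P" "P \<le> 1/2" "f i \<le> 4/7 \<Longrightarrow> 1/13 \<le> P"
    "1/16 \<le> f i \<Longrightarrow> P \<le> 12/25" "1/13 \<le> y i \<Longrightarrow> P \<le> 12/25"
proof -
  define a where "a = (1 - f i) * (1 - y i)"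
  define R where "R = (\<Sum>j\<in>{1..4} - {i}. (1 - f j) * (1 - y j))"
  have P: "P = a / (a + R)" unfolding P_def a_def R_def using i by (simp add: sum.remove)
  note R = sum_other_colours_bounds[of f y i, OF f_bounds y_bounds f_sum i, folded R_def]
  have fi: "0 \<le> 1 - f i" "1 - f i \<le> 1" and yi: "1/2 \<le> 1 - y i" "1 - y i \<le> 1"
    using f_bounds[OF i] y_bounds[OF i] by auto
  have a_lower: "1 - f i \<le> 2 * a" unfolding a_def
    using mult_left_mono[OF yi(1) fi(1)] by simp
  have a_upper: "a \<le> 1 - f i" unfolding a_def
    using mult_left_mono[OF yi(2) fi(1)] by simp
  have den: "a + R > 0" using a_lower R(1) fi by linarith
  show "0 \<le> P" unfolding P using a_lower fi(1) den by simp
  show "P \<le> 1/2" unfolding P using den a_upper fi R(1) by (simp add: divide_simps)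
  show "f i \<le> 4/7 \<Longrightarrow> 1/13 \<le> P" unfolding P using den a_lower R(2) by (simp add: divide_simps)
  show "1/16 \<le> f i \<Longrightarrow> P \<le> 12/25" unfolding P using den a_upper R(1) by (simp add: divide_simps)
  assume "1/13 \<le> y i"
  then have "a \<le> (1 - f i) * (12/13)" unfolding a_def
    using mult_left_mono[of "1 - y i" "12/13" "1 - f i"] fi by simp
  then show "P \<le> 12/25" unfolding P using den R(1) fi by (simp add: divide_simps)
qed

subsection \<open>Deleting a vertex from a reachable instance\<close>

lemma nbrs_subset_vertices: "simple_graph G \<Longrightarrow> nbrs G v \<subseteq> fst G - {v}"
  unfolding simple_graph_def nbrs_def by (auto simp: doubleton_eq_iff)

lemma finite_nbrs: "simple_graph G \<Longrightarrow> finite (nbrs G v)"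
  using nbrs_subset_vertices unfolding simple_graph_def by (meson finite_Diff finite_subset)

lemma nbrs_sym: "u \<in> nbrs G v \<longleftrightarrow> v \<in> nbrs G u"
  unfolding nbrs_def by (simp add: insert_commute)

lemma nbrs_del: "u \<noteq> v \<Longrightarrow> nbrs (del G v) u = nbrs G u - {v}"
  unfolding nbrs_def del_def by auto

lemma simple_graph_del: "simple_graph G \<Longrightarrow> simple_graph (del G v)"
  unfolding simple_graph_def del_def by fastforce

lemma deg_pos_if_nbr: "simple_graph G \<Longrightarrow> v \<in> nbrs G u \<Longrightarrow> deg G u \<ge> 1"
  unfolding deg_def using finite_nbrs[of G u] by (auto simp: Suc_le_eq card_gt_0_iff)

lemma deg_del:
  assumes "simple_graph G" "u \<noteq> v"
  shows "deg (del G v) u = (if v \<in> nbrs G u then deg G u - 1 else deg G u)"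
  unfolding deg_def nbrs_del[OF assms(2)] using finite_nbrs[OF assms(1)] by auto

lemma valid_nbo_nbrs:
  assumes "valid_nbo nbo" "simple_graph G"
  shows "distinct (nbo G v)" "set (nbo G v) = nbrs G v" "length (nbo G v) = deg G v"
proof -
  have "distinct (nbo G v) \<and> set (nbo G v) = nbrs G v"
    using assms finite_nbrs[OF assms(2)] unfolding valid_nbo_def by blast
  then show "distinct (nbo G v)" "set (nbo G v) = nbrs G v" "length (nbo G v) = deg G v"
    unfolding deg_def using distinct_card by metis+
qed

definition deg_bounded_instance :: "'a graph \<Rightarrow> ('a \<Rightarrow> nat set) \<Rightarrow> bool" where
  "deg_bounded_instance G L \<longleftrightarrow>
     list_instance G L \<and> (\<forall>u\<in>fst G. deg G u \<le> 3 \<and> card (L u) \<ge> deg G u + 1)"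

lemma reachable_iff_deg_bounded_instance:
  "reachable G L v \<longleftrightarrow>
     deg_bounded_instance G L \<and> v \<in> fst G \<and> deg G v \<le> 2 \<and> card (L v) \<ge> deg G v + 2"
  unfolding reachable_def deg_bounded_instance_def by auto

lemma reachableD:
  assumes "reachable G L v"
  shows "simple_graph G" "deg_bounded_instance G L" "L v \<subseteq> {1..4}" "card (L v) \<le> 4"
    "deg G v \<le> 2" "card (L v) \<ge> deg G v + 2"
proof -
  show "simple_graph G" "deg_bounded_instance G L" "deg G v \<le> 2" "card (L v) \<ge> deg G v + 2"
    using assms unfolding reachable_iff_deg_bounded_instance deg_bounded_instance_def
      list_instance_def by auto
  show L: "L v \<subseteq> {1..4}" using assms unfolding reachable_def list_instance_def by auto
  have "card (L v) \<le> card {1..4::nat}" using L by (intro card_mono) auto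
  then show "card (L v) \<le> 4" by simp
qed

text \<open>Removing v lowers the degree of each neighbour by one, which pays for the colour
  that may have been removed from its list.\<close>

lemma reachable_del:
  assumes G: "deg_bounded_instance G L" and u: "u \<in> nbrs G v"
    and L'_sub: "\<And>w. L' w \<subseteq> L w" and L'_u: "L' u = L u"
    and L'_far: "\<And>w. w \<notin> nbrs G v \<Longrightarrow> L' w = L w"
    and L'_card: "\<And>w. w \<in> fst G \<Longrightarrow> card (L w) \<le> card (L' w) + 1"
  shows "reachable (del G v) L' u"
proof -
  have sg: "simple_graph G" using G unfolding deg_bounded_instance_def list_instance_def by auto
  have uG: "u \<in> fst G" "u \<noteq> v" using nbrs_subset_vertices[OF sg] u by auto
  have li: "list_instance (del G v) L'"
    using simple_graph_del[OF sg] G L'_sub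
    unfolding list_instance_def deg_bounded_instance_def del_def by fastforce
  have "deg (del G v) w \<le> 3 \<and> card (L' w) \<ge> deg (del G v) w + 1" if "w \<in> fst (del G v)" for w
  proof -
    have wG: "w \<in> fst G" "w \<noteq> v" using that unfolding del_def by auto
    have w: "deg G w \<le> 3" "card (L w) \<ge> deg G w + 1"
      using G wG unfolding deg_bounded_instance_def by auto
    show ?thesis
    proof (cases "v \<in> nbrs G w")
      case True
      then show ?thesis
        using w deg_del[OF sg wG(2)] L'_card[OF wG(1)] deg_pos_if_nbr[OF sg True] by auto
    next
      case False
      then have "L' w = L w" using L'_far nbrs_sym by metis
      then show ?thesis using w False deg_del[OF sg wG(2)] by auto
    qed
  qed
  moreover have "deg (del G v) u = deg G u - 1" "deg G u \<ge> 1"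
    using u nbrs_sym deg_del[OF sg uG(2)] deg_pos_if_nbr[OF sg] by metis+
  moreover have "deg G u \<le> 3" "card (L u) \<ge> deg G u + 1"
    using G uG unfolding deg_bounded_instance_def by auto
  ultimately show ?thesis
    unfolding reachable_iff_deg_bounded_instance deg_bounded_instance_def
    using li uG L'_u by (auto simp: del_def)
qed

lemma reachable_del_Lmod:
  assumes G: "deg_bounded_instance G L"
    and us: "distinct us" "set us = nbrs G v" and k: "k < length us"
  shows "reachable (del G v) (Lmod L us k w) (us ! k)"
proof (rule reachable_del[OF G])
  show "us ! k \<in> nbrs G v" using us k by (metis nth_mem)
  show "Lmod L us k w (us ! k) = L (us ! k)"
  proof -
    have "distinct (take k us @ us ! k # drop (Suc k) us)"
      using us(1) id_take_nth_drop[OF k] by simp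
    then show ?thesis unfolding Lmod_def by simp
  qed
  show "Lmod L us k w u = L u" if "u \<notin> nbrs G v" for u
    using that us set_take_subset[of k us] unfolding Lmod_def by auto
  show "card (L u) \<le> card (Lmod L us k w u) + 1" for u
  proof (cases "finite (L u)")
    case True
    then show ?thesis unfolding Lmod_def by (cases "w \<in> L u") (auto simp: card_Diff_singleton)
  qed (simp add: Lmod_def)
qed (auto simp: Lmod_def)

subsection \<open>The invariant of the recursion\<close>

definition bounded_marginals :: "('a graph \<Rightarrow> ('a \<Rightarrow> nat set) \<Rightarrow> 'a \<Rightarrow> nat \<Rightarrow> real) \<Rightarrow> bool" where
  "bounded_marginals R \<longleftrightarrow> (\<forall>G L v i. reachable G L v \<longrightarrow>
      0 \<le> R G L v i \<and> R G L v i \<le> 1/2 \<and> (i \<in> L v \<longrightarrow> 1/13 \<le> R G L v i))"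

lemma bounded_marginalsD:
  "bounded_marginals R \<Longrightarrow> reachable G L v \<Longrightarrow>
     0 \<le> R G L v i \<and> R G L v i \<le> 1/2 \<and> (i \<in> L v \<longrightarrow> 1/13 \<le> R G L v i)"
  unfolding bounded_marginals_def by blast

lemma Pstep_deg0_bounds:
  assumes "reachable G L v" "deg G v = 0"
  shows "0 \<le> Pstep nbo R G L v i \<and> Pstep nbo R G L v i \<le> 1/2 \<and>
    (i \<in> L v \<longrightarrow> 1/13 \<le> Pstep nbo R G L v i)"
proof -
  have "2 \<le> card (L v)" "card (L v) \<le> 4" using reachableD[OF assms(1)] assms(2) by auto
  then show ?thesis unfolding Pstep_def using assms(2) by (auto simp: divide_simps)
qed

lemma Pstep_deg1_bounds:
  assumes nbo: "valid_nbo nbo" and R: "bounded_marginals R"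
    and r: "reachable G L v" and deg: "deg G v = 1"
  shows "0 \<le> Pstep nbo R G L v i \<and> Pstep nbo R G L v i \<le> 1/2 \<and>
      (i \<in> L v \<longrightarrow> 1/13 \<le> Pstep nbo R G L v i)"
    "\<exists>u\<in>nbrs G v. i \<in> L u \<Longrightarrow> Pstep nbo R G L v i \<le> 6/13"
proof -
  note rD = reachableD[OF r]
  have card: "3 \<le> card (L v)" "card (L v) \<le> 4" using rD deg by auto
  define v1 where "v1 = hd (nbo G v)"
  have nbo_v: "distinct (nbo G v)" "set (nbo G v) = nbrs G v" "length (nbo G v) = 1"
    using valid_nbo_nbrs[OF nbo rD(1), of v] deg by auto
  then have "nbo G v = [v1]" unfolding v1_def by (cases "nbo G v") auto
  then have nbrs_v: "nbrs G v = {v1}" and r1: "reachable (del G v) L v1"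
    using nbo_v reachable_del_Lmod[OF rD(2) nbo_v(1,2), of 0] by (auto simp: Lmod_def)
  define x where "x = R (del G v) L v1 i"
  define y where "y = R (del G v) L v1 (the_elem ({1..4} - L v))"
  have x: "0 \<le> x" "x \<le> 1/2" "i \<in> L v1 \<Longrightarrow> 1/13 \<le> x"
    using bounded_marginalsD[OF R r1] unfolding x_def by auto
  have y: "0 \<le> y" "y \<le> 1/2" using bounded_marginalsD[OF R r1] unfolding y_def by auto
  have P: "Pstep nbo R G L v i =
      (if i \<notin> L v then 0 else if card (L v) = 4 then (1 - x) / 3 else (1 - x) / (2 + y))"
    unfolding Pstep_def Let_def x_def y_def v1_def using deg card by auto
  show "0 \<le> Pstep nbo R G L v i \<and> Pstep nbo R G L v i \<le> 1/2 \<and>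
      (i \<in> L v \<longrightarrow> 1/13 \<le> Pstep nbo R G L v i)"
    unfolding P using x y by (simp add: divide_simps)
  assume "\<exists>u\<in>nbrs G v. i \<in> L u"
  then have "1/13 \<le> x" using x nbrs_v by auto
  then show "Pstep nbo R G L v i \<le> 6/13" unfolding P using y by (simp add: divide_simps)
qed

lemma first_neighbour_weights:
  fixes R :: "'a graph \<Rightarrow> ('a \<Rightarrow> nat set) \<Rightarrow> 'a \<Rightarrow> nat \<Rightarrow> real"
  assumes nbo: "valid_nbo nbo" and R: "bounded_marginals R" and r: "reachable G L v1"
    and us_def: "us = nbo G v1"
    and Q_def: "Q = (\<lambda>w. \<Prod>k<length us. 1 - R (del G v1) (Lmod L us k w) (us ! k) w)"
    and f_def: "f = (\<lambda>j. if j \<notin> L v1 then 0 else Q j / (\<Sum>w\<in>L v1. Q w))"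
  shows "0 \<le> f j" "f j \<le> 1" "sum f {1..4} = 1" "f i \<le> 4/7" "i \<in> L v1 \<Longrightarrow> 1/16 \<le> f i"
proof -
  note rD = reachableD[OF r]
  have us: "distinct us" "set us = nbrs G v1" "length us = deg G v1"
    using valid_nbo_nbrs[OF nbo rD(1)] unfolding us_def by auto
  have Q_bounds: "(1/2)^deg G v1 \<le> Q w \<and> Q w \<le> 1" for w
    using prod_one_minus_bounds[of "length us" "\<lambda>k. R (del G v1) (Lmod L us k w) (us ! k) w"]
      bounded_marginalsD[OF R reachable_del_Lmod[OF rD(2) us(1,2)]]
    unfolding Q_def us(3) by auto
  then have Q_pos: "0 < Q w" for w by (smt (verit) zero_less_power zero_less_divide_1_iff)
  have L_v1: "L v1 \<subseteq> {1..4}" "L v1 \<noteq> {}" "card (L v1) \<ge> deg G v1 + 2" "deg G v1 \<le> 2"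
    using rD by auto
  show "0 \<le> f j" "f j \<le> 1" "sum f {1..4} = 1"
    using normalized_weights_distribution[where Q = Q and A = "L v1", OF L_v1(1,2) Q_pos]
    unfolding f_def by auto
  show "i \<in> L v1 \<Longrightarrow> 1/16 \<le> f i" "f i \<le> 4/7"
    using normalized_weight_bounds[where Q = Q, OF L_v1(1) _ L_v1(3,4) Q_bounds]
    unfolding f_def by auto
qed

lemma Pstep_deg2_bounds:
  assumes nbo: "valid_nbo nbo" and R: "bounded_marginals R"
    and r: "reachable G L v" and deg: "deg G v = 2"
  shows "0 \<le> Pstep nbo R G L v i \<and> Pstep nbo R G L v i \<le> 1/2 \<and>
      (i \<in> L v \<longrightarrow> 1/13 \<le> Pstep nbo R G L v i)"
    "\<exists>u\<in>nbrs G v. i \<in> L u \<Longrightarrow> Pstep nbo R G L v i \<le> 12/25"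
proof -
  note rD = reachableD[OF r]
  have "card (L v) = card {1..4::nat}" using rD deg by simp
  then have L_v: "L v = {1..4}" using rD(3) by (simp add: card_subset_eq)
  define a b where "a = nbo G v ! 0" and "b = nbo G v ! 1"
  have nbo_v: "distinct (nbo G v)" "set (nbo G v) = nbrs G v" "length (nbo G v) = 2"
    using valid_nbo_nbrs[OF nbo rD(1), of v] deg by auto
  then have "nbo G v = [a, b]" unfolding a_def b_def by (auto simp: numeral_2_eq_2 length_Suc_conv)
  \<comment> \<open>The estimates hold for either order of the two neighbours.\<close>
  define v1 v2 where "v1 = (if good_pair G L i a b then a else b)"
    and "v2 = (if good_pair G L i a b then b else a)"
  have v12: "distinct [v1, v2]" "set [v1, v2] = nbrs G v"
    using nbo_v \<open>nbo G v = [a, b]\<close> unfolding v1_def v2_def by auto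
  define us where "us = nbo (del G v) v1"
  define Q where "Q = (\<lambda>w. \<Prod>k<length us. 1 - R (del (del G v) v1) (Lmod L us k w) (us ! k) w)"
  define f where "f = (\<lambda>j. if j \<notin> L v1 then 0 else Q j / (\<Sum>w\<in>L v1. Q w))"
  define y where "y = (\<lambda>j. R (del G v) (Lmod L [v1, v2] 1 j) v2 j)"
  have P: "Pstep nbo R G L v i = (if i \<notin> L v then 0 else
      (1 - f i) * (1 - y i) / (\<Sum>j\<in>{1..4}. (1 - f j) * (1 - y j)))"
    unfolding Pstep_def Let_def f_def y_def Q_def us_def v1_def v2_def a_def b_def L_v[symmetric]
    by (simp only: deg if_False if_True rel_simps simp_thms)
  have "v1 \<in> nbrs G v" using v12 by auto
  then have r1: "reachable (del G v) L v1"
    using reachable_del_Lmod[OF rD(2) v12, of 0] by (simp add: Lmod_def)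
  note f = first_neighbour_weights[OF nbo R r1 us_def Q_def f_def]
  have y: "0 \<le> y j \<and> y j \<le> 1/2 \<and> (j \<in> L v2 \<longrightarrow> 1/13 \<le> y j)" for j
    using bounded_marginalsD[OF R reachable_del_Lmod[OF rD(2) v12, of 1 j]] v12(1)
    unfolding y_def Lmod_def by auto
  have "0 \<le> f j \<and> f j \<le> 1" "0 \<le> y j \<and> y j \<le> 1/2" if "j \<in> {1..4}" for j
    using f(1,2) y by auto
  note ratio = deg2_ratio_bounds[of f y i, OF this f(3)]
  show "0 \<le> Pstep nbo R G L v i \<and> Pstep nbo R G L v i \<le> 1/2 \<and>
      (i \<in> L v \<longrightarrow> 1/13 \<le> Pstep nbo R G L v i)"
    unfolding P L_v using ratio(1-3) f(3,4) y by auto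
  assume "\<exists>u\<in>nbrs G v. i \<in> L u"
  then have "i \<in> L v1 \<or> i \<in> L v2" using v12 by auto
  then have "1/16 \<le> f i \<or> 1/13 \<le> y i" using f(5) y by auto
  moreover have "i \<in> {1..4}"
  proof -
    have "v1 \<in> fst G" "v2 \<in> fst G" using v12 nbrs_subset_vertices[OF rD(1), of v] by auto
    then show ?thesis using \<open>i \<in> L v1 \<or> i \<in> L v2\<close> rD(2)
      unfolding deg_bounded_instance_def list_instance_def by blast
  qed
  ultimately show "Pstep nbo R G L v i \<le> 12/25"
    unfolding P L_v using ratio(4,5) f(3) y by auto
qed

lemma Pstep_bounds:
  assumes "valid_nbo nbo" "bounded_marginals R"
  shows "bounded_marginals (Pstep nbo R)"
  unfolding bounded_marginals_def
  using Pstep_deg0_bounds Pstep_deg1_bounds(1)[OF assms] Pstep_deg2_bounds(1)[OF assms]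
    reachableD(5) by (metis le_SucE le_zero_eq numeral_2_eq_2 One_nat_def)

lemma Pproc_bounds:
  assumes "valid_nbo nbo"
  shows "bounded_marginals (\<lambda>G L v i. Pproc nbo G L v i D)"
proof (induction D)
  case 0
  show ?case unfolding bounded_marginals_def
  proof (intro allI impI)
    fix G :: "'a graph" and L v i assume r: "reachable G L v"
    have "2 \<le> card (L v)" "card (L v) \<le> 4" using reachableD(4,6)[OF r] by auto
    then show "0 \<le> Pproc nbo G L v i 0 \<and> Pproc nbo G L v i 0 \<le> 1/2 \<and>
        (i \<in> L v \<longrightarrow> 1/13 \<le> Pproc nbo G L v i 0)"
      by (auto simp: divide_simps)
  qed
next
  case (Suc D)
  show ?case using Pstep_bounds[OF assms Suc.IH] by simp
qed

theorem proposition9: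
  fixes G :: "'a graph" and L :: "'a \<Rightarrow> nat set" and v :: 'a
    and i D :: nat and nbo :: "'a graph \<Rightarrow> 'a \<Rightarrow> 'a list"
  assumes "valid_nbo nbo"
    and "reachable G L v"
    and "i \<in> {1..4}"
    and "\<exists>u\<in>nbrs G v. i \<in> L u"
  shows "(deg G v = 2 \<longrightarrow> Pproc nbo G L v i D \<le> 12 / 25) \<and>
         (deg G v = 1 \<longrightarrow> Pproc nbo G L v i D \<le> 6 / 13)"
proof (cases D)
  case 0
  have "deg G v + 2 \<le> card (L v)" using reachableD[OF assms(2)] by auto
  then show ?thesis unfolding 0 by (auto simp: divide_simps)
next
  case (Suc D')
  note R = Pproc_bounds[OF assms(1), of D']
  show ?thesis unfolding Suc Pproc.simps
    using Pstep_deg1_bounds(2)[OF assms(1) R assms(2) _ assms(4)]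
      Pstep_deg2_bounds(2)[OF assms(1) R assms(2) _ assms(4)]
    by blast
qed

end
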